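(* For every $1$-Sperner hypergraph ${\cal H}=(V,{\cal E})$ with $|V|\ge2$ and without universal vertices, isolated vertices, and twin vertices, we have $|{\cal E}|\ge\left\lceil\frac{|V|+2}{2}\right\rceil$. This bound is sharp: for every $k\ge2$ there is such a hypergraph with $|V|=2^k-2$ and $|{\cal E}|=2^{k-1}=\left\lceil\frac{|V|+2}{2}\right\rceil$.
   Context: A hypergraph ${\cal H}=(V,{\cal E})$ consists of a finite vertex set $V$ and a set ${\cal E}$ of subsets of $V$. It is $1$-Sperner if every two distinct hyperedges $e,f$ satisfy $\min\{|e\setminus f|,|f\setminus e|\}=1$. A vertex is universal (resp. isolated) if it belongs to all (resp. no) hyperedges; two distinct vertices are twins if they belong to exactly the same hyperedges. *)

theory Defs
  imports Complex_Main
begin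

definition hypergraph :: "'a set \<Rightarrow> 'a set set \<Rightarrow> bool" where
  "hypergraph V E \<longleftrightarrow> finite V \<and> (\<forall>e\<in>E. e \<subseteq> V)"

definition one_sperner :: "'a set set \<Rightarrow> bool" where
  "one_sperner E \<longleftrightarrow>
     (\<forall>e\<in>E. \<forall>f\<in>E. e \<noteq> f \<longrightarrow> min (card (e - f)) (card (f - e)) = 1)"

definition universal_vertex :: "'a set set \<Rightarrow> 'a \<Rightarrow> bool" where
  "universal_vertex E v \<longleftrightarrow> (\<forall>e\<in>E. v \<in> e)"

definition isolated_vertex :: "'a set set \<Rightarrow> 'a \<Rightarrow> bool" where
  "isolated_vertex E v \<longleftrightarrow> (\<forall>e\<in>E. v \<notin> e)"

definition twins :: "'a set set \<Rightarrow> 'a \<Rightarrow> 'a \<Rightarrow> bool" where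
  "twins E u v \<longleftrightarrow> u \<noteq> v \<and> (\<forall>e\<in>E. u \<in> e \<longleftrightarrow> v \<in> e)"

definition reduced_1_sperner :: "'a set \<Rightarrow> 'a set set \<Rightarrow> bool" where
  "reduced_1_sperner V E \<longleftrightarrow> hypergraph V E \<and> one_sperner E
     \<and> (\<forall>v\<in>V. \<not> universal_vertex E v) \<and> (\<forall>v\<in>V. \<not> isolated_vertex E v)
     \<and> (\<forall>u\<in>V. \<forall>v\<in>V. \<not> twins E u v)"

end

theory Submission
  imports Defs
begin

text \<open>
  Each vertex \<open>v\<close> has a type, the family of edges containing \<open>v\<close>. In a hypergraph
  without universal, isolated and twin vertices the types are pairwise distinct subfamilies of
  \<open>E\<close> other than \<open>{}\<close> and \<open>E\<close>, so it suffices to show that a 1-Sperner family \<open>E\<close>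
  has at most \<open>2|E| - 2\<close> such proper types. A 1-Sperner family with at least two edges has a
  vertex \<open>z\<close> such that every edge through \<open>z\<close>, with \<open>z\<close> removed, lies in every edge
  avoiding \<open>z\<close>. Splitting \<open>E\<close> into the edges \<open>E\<^sub>1\<close> through \<open>z\<close> and \<open>E\<^sub>2\<close> avoiding
  it, every proper type of \<open>E\<close> is \<open>E\<^sub>1\<close>, \<open>E\<^sub>2\<close>, a proper type of \<open>E\<^sub>2\<close>, or a proper
  type of \<open>E\<^sub>1\<close> together with all of \<open>E\<^sub>2\<close>; induction on \<open>|E|\<close> gives the bound.

  For sharpness, two disjoint extremal hypergraphs \<open>(V\<^sub>1, E\<^sub>1)\<close>, \<open>(V\<^sub>2, E\<^sub>2)\<close> and two new
  vertices \<open>z\<close>, \<open>w\<close> give the extremal hypergraph with edges \<open>e \<union> {z}\<close> for \<open>e \<in> E\<^sub>1\<close> and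
  \<open>f \<union> V\<^sub>1 \<union> {w}\<close> for \<open>f \<in> E\<^sub>2\<close>, doubling both \<open>|E|\<close> and \<open>|V| + 2\<close>.
\<close>

definition vertex_type :: "'a set set \<Rightarrow> 'a \<Rightarrow> 'a set set" where
  "vertex_type E v = {e \<in> E. v \<in> e}"

definition proper_vertex_types :: "'a set \<Rightarrow> 'a set set \<Rightarrow> 'a set set set" where
  "proper_vertex_types V E = vertex_type E ` V - {{}, E}"

lemma one_sperner_subset: "one_sperner E \<Longrightarrow> F \<subseteq> E \<Longrightarrow> one_sperner F"
  unfolding one_sperner_def by blast

lemma one_sperner_card_Diff:
  assumes "one_sperner E" "e \<in> E" "g \<in> E" "e \<noteq> g"
  shows "card (e - g) = 1 \<or> card (g - e) = 1" and "1 \<le> card (e - g)"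
  using assms unfolding one_sperner_def by (metis min_def nle_le)+

lemma one_sperner_card_Diff_largest:
  assumes sp: "one_sperner E" and fin: "\<forall>e\<in>E. finite e"
    and f: "f \<in> E" and f_max: "\<forall>e\<in>E. card e \<le> card f" and e: "e \<in> E" "e \<noteq> f"
  shows "card (e - f) = 1"
proof (rule ccontr)
  assume "card (e - f) \<noteq> 1"
  with one_sperner_card_Diff[OF sp e(1) f e(2)]
  have "2 \<le> card (e - f)" "card (f - e) = 1" by auto
  moreover have "card e = card (e \<inter> f) + card (e - f)" "card f = card (e \<inter> f) + card (f - e)"
    using fin e(1) f by (metis card_Int_Diff Int_commute)+
  moreover have "card e \<le> card f" using f_max e(1) by blast
  ultimately show False by linarith
qed

lemma one_sperner_outside_points:
  assumes sp: "one_sperner E" and "e \<in> E" "g \<in> E"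
    and "e - f = {z}" "g - f = {x}" "z \<noteq> x"
  shows "e \<inter> f \<subseteq> g \<or> g \<inter> f \<subseteq> e"
proof -
  have "z \<in> e" "z \<notin> f" "x \<in> g" "x \<notin> f" using assms(4,5) by auto
  then have z: "z \<in> e - g" and x: "x \<in> g - e" using assms(4-6) by auto
  then have "e \<noteq> g" by blast
  then have "card (e - g) = 1 \<or> card (g - e) = 1"
    using one_sperner_card_Diff(1)[OF sp assms(2,3)] by blast
  then have "e - g = {z} \<or> g - e = {x}"
    using z x by (metis card_1_singletonE singletonD)
  then show ?thesis using assms(4,5) by blast
qed

context
  fixes E :: "'a set set" and f e0 :: "'a set" and z :: 'a
  assumes sp: "one_sperner E" and fin: "\<forall>e\<in>E. finite e"
    and f: "f \<in> E" and outside: "\<And>e. e \<in> E \<Longrightarrow> e \<noteq> f \<Longrightarrow> card (e - f) = 1"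
    and e0: "e0 \<in> E" "e0 \<noteq> f" and e0_min: "\<And>e. e \<in> E \<Longrightarrow> e \<noteq> f \<Longrightarrow> card e0 \<le> card e"
    and z: "e0 - f = {z}"
begin

lemma one_sperner_smallest_edge_Int_subset:
  assumes g: "g \<in> E" "z \<notin> g"
  shows "e0 \<inter> f \<subseteq> g"
proof (cases "g = f")
  case False
  obtain x where x: "g - f = {x}" using outside[OF g(1) False] by (rule card_1_singletonE)
  have "z \<noteq> x" using x g(2) by auto
  have "card e0 = card (e0 \<inter> f) + 1" "card g = card (g \<inter> f) + 1"
    using fin e0(1) g(1) z x card_Int_Diff[of e0 f] card_Int_Diff[of g f] by simp_all
  then have "card (e0 \<inter> f) \<le> card (g \<inter> f)" using e0_min[OF g(1) False] by linarith
  then have "g \<inter> f \<subseteq> e0 \<Longrightarrow> g \<inter> f = e0 \<inter> f"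
    using fin e0(1) by (intro card_seteq) auto
  then show ?thesis using one_sperner_outside_points[OF sp e0(1) g(1) z x \<open>z \<noteq> x\<close>] by blast
qed blast

text \<open>If \<open>e \<inter> f \<subseteq> g\<close> fails then \<open>g \<inter> f \<subseteq> e\<close>, which forces \<open>e0 \<subseteq> e\<close>
  and hence \<open>e = e0\<close>.\<close>
lemma one_sperner_edge_Diff_subset:
  assumes e: "e \<in> E" "z \<in> e" and g: "g \<in> E" "z \<notin> g"
  shows "e - {z} \<subseteq> g"
proof -
  have z_f: "z \<notin> f" and e0_split: "e0 \<subseteq> insert z (e0 \<inter> f)" using z by auto
  then have "e \<noteq> f" using e(2) by auto
  obtain y where "e - f = {y}" using outside[OF e(1) \<open>e \<noteq> f\<close>] by (rule card_1_singletonE)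
  then have ez: "e - f = {z}" using e(2) z_f by auto
  then have e_split: "e \<subseteq> insert z (e \<inter> f)" by auto
  have e0_g: "e0 \<inter> f \<subseteq> g" by (rule one_sperner_smallest_edge_Int_subset[OF g])
  show ?thesis
  proof (cases "g = f")
    case False
    obtain x where x: "g - f = {x}" using outside[OF g(1) False] by (rule card_1_singletonE)
    have "z \<noteq> x" using x g(2) by auto
    then have "e \<inter> f \<subseteq> g \<or> g \<inter> f \<subseteq> e"
      using one_sperner_outside_points[OF sp e(1) g(1) ez x] by blast
    moreover have "e0 \<subseteq> e" if "g \<inter> f \<subseteq> e"
      using that e0_g e0_split e(2) by blast
    moreover have "e0 = e" if "e0 \<subseteq> e"
      using that one_sperner_card_Diff(2)[OF sp e0(1) e(1)]
      by (metis Diff_eq_empty_iff card.empty not_one_le_zero)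
    ultimately show ?thesis using e_split e0_g by blast
  qed (use e_split in blast)
qed

end

text \<open>The splitting vertex is the point by which a smallest edge other than a largest edge
  \<open>f\<close> leaves \<open>f\<close>.\<close>
lemma one_sperner_splitting_vertex:
  assumes fin_E: "finite E" and sp: "one_sperner E" and two: "2 \<le> card E"
    and fin: "\<forall>e\<in>E. finite e"
  obtains z where "\<exists>e\<in>E. z \<in> e" and "\<exists>g\<in>E. z \<notin> g"
    and "\<And>e g. e \<in> E \<Longrightarrow> g \<in> E \<Longrightarrow> z \<in> e \<Longrightarrow> z \<notin> g \<Longrightarrow> e - {z} \<subseteq> g"
proof -
  have "E \<noteq> {}" using two by auto
  obtain f where f: "f \<in> E" "Max (card ` E) = card f" using obtains_MAX[OF fin_E \<open>E \<noteq> {}\<close>] .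
  then have "\<forall>e\<in>E. card e \<le> card f" using fin_E by (metis Max_ge finite_imageI imageI)
  note outside = one_sperner_card_Diff_largest[OF sp fin f(1) this]
  have "E - {f} \<noteq> {}"
  proof
    assume "E - {f} = {}"
    then have "E = {f}" using f(1) by blast
    then show False using two by simp
  qed
  then obtain e0 where e0: "e0 \<in> E" "e0 \<noteq> f"
    and e0_min: "\<And>e. e \<in> E \<Longrightarrow> e \<noteq> f \<Longrightarrow> card e0 \<le> card e"
    using ex_has_least_nat[where m = card and P = "\<lambda>e. e \<in> E - {f}"] by blast
  obtain z where z: "e0 - f = {z}" using outside[OF e0] by (rule card_1_singletonE)
  then have "z \<in> e0" "z \<notin> f" by auto
  show ?thesis
  proof (rule that)
    show "\<exists>e\<in>E. z \<in> e" using e0(1) \<open>z \<in> e0\<close> by blast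
    show "\<exists>g\<in>E. z \<notin> g" using f(1) \<open>z \<notin> f\<close> by blast
  qed (rule one_sperner_edge_Diff_subset[OF sp fin f(1) outside e0 e0_min z])
qed

lemma proper_vertex_types_subset: "proper_vertex_types V E \<subseteq> Pow E - {{}, E}"
  unfolding proper_vertex_types_def vertex_type_def by auto

lemma finite_proper_vertex_types: "finite E \<Longrightarrow> finite (proper_vertex_types V E)"
  using proper_vertex_types_subset by (rule finite_subset) simp

text \<open>A vertex other than \<open>z\<close> that lies in some edge through \<open>z\<close> lies in every edge
  avoiding \<open>z\<close>.\<close>
lemma proper_vertex_types_split:
  assumes split: "\<And>e g. e \<in> E \<Longrightarrow> g \<in> E \<Longrightarrow> z \<in> e \<Longrightarrow> z \<notin> g \<Longrightarrow> e - {z} \<subseteq> g"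
  defines "E1 \<equiv> {e \<in> E. z \<in> e}" and "E2 \<equiv> {e \<in> E. z \<notin> e}"
  shows "proper_vertex_types V E \<subseteq>
    {E1, E2} \<union> (\<lambda>T. T \<union> E2) ` proper_vertex_types V E1 \<union> proper_vertex_types V E2"
proof
  fix S assume "S \<in> proper_vertex_types V E"
  then obtain v where v: "v \<in> V" "S = vertex_type E v" and S: "S \<noteq> {}" "S \<noteq> E"
    unfolding proper_vertex_types_def by auto
  have S_Un: "S = vertex_type E1 v \<union> vertex_type E2 v"
    using v(2) unfolding vertex_type_def E1_def E2_def by auto
  consider "v = z" | "vertex_type E1 v = {}" | "v \<noteq> z" "vertex_type E1 v \<noteq> {}" by blast
  then show "S \<in> {E1, E2} \<union> (\<lambda>T. T \<union> E2) ` proper_vertex_types V E1 \<union> proper_vertex_types V E2"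
  proof cases
    case 1
    then have "S = E1" using v(2) unfolding vertex_type_def E1_def by simp
    then show ?thesis by simp
  next
    case 2
    then show ?thesis using S_Un S v(1) unfolding proper_vertex_types_def by auto
  next
    case 3
    then obtain e where e: "e \<in> E" "z \<in> e" "v \<in> e" unfolding vertex_type_def E1_def by auto
    have "v \<in> g" if "g \<in> E2" for g
      using split[OF e(1) _ e(2)] that e(3) \<open>v \<noteq> z\<close> unfolding E2_def by blast
    then have S_E2: "S = vertex_type E1 v \<union> E2"
      using S_Un unfolding vertex_type_def E2_def by auto
    moreover have "vertex_type E1 v \<noteq> E1"
      using S_E2 S(2) unfolding E1_def E2_def by auto
    ultimately show ?thesis using 3 v(1) unfolding proper_vertex_types_def by auto
  qed
qed

lemma proper_vertex_types_singleton: "proper_vertex_types V {e} = {}"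
proof -
  have "Pow {e} - {{}, {e}} = {}" by (auto simp: subset_singleton_iff)
  then show ?thesis using proper_vertex_types_subset[of V "{e}"] by (simp only: subset_empty)
qed

lemma card_proper_vertex_types_split:
  assumes split: "\<And>e g. e \<in> E \<Longrightarrow> g \<in> E \<Longrightarrow> z \<in> e \<Longrightarrow> z \<notin> g \<Longrightarrow> e - {z} \<subseteq> g"
    and "finite E"
  defines "E1 \<equiv> {e \<in> E. z \<in> e}" and "E2 \<equiv> {e \<in> E. z \<notin> e}"
  shows "card (proper_vertex_types V E)
    \<le> 2 + card (proper_vertex_types V E1) + card (proper_vertex_types V E2)"
proof -
  let ?T1 = "proper_vertex_types V E1" and ?T2 = "proper_vertex_types V E2"
  have fin: "finite ?T1" "finite ?T2"
    using \<open>finite E\<close> unfolding E1_def E2_def by (simp_all add: finite_proper_vertex_types)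
  have "card (proper_vertex_types V E) \<le> card ({E1, E2} \<union> (\<lambda>T. T \<union> E2) ` ?T1 \<union> ?T2)"
  proof (rule card_mono)
    show "finite ({E1, E2} \<union> (\<lambda>T. T \<union> E2) ` ?T1 \<union> ?T2)" using fin by simp
    show "proper_vertex_types V E \<subseteq> {E1, E2} \<union> (\<lambda>T. T \<union> E2) ` ?T1 \<union> ?T2"
      using proper_vertex_types_split[where V = V and E = E and z = z, OF split]
      unfolding E1_def E2_def .
  qed
  also have "\<dots> \<le> card {E1, E2} + card ((\<lambda>T. T \<union> E2) ` ?T1) + card ?T2"
    using card_Un_le[of "{E1, E2} \<union> (\<lambda>T. T \<union> E2) ` ?T1" ?T2]
      card_Un_le[of "{E1, E2}" "(\<lambda>T. T \<union> E2) ` ?T1"] by linarith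
  also have "\<dots> \<le> 2 + card ?T1 + card ?T2"
  proof -
    have "card {E1, E2} \<le> 2" by (cases "E1 = E2") simp_all
    moreover have "card ((\<lambda>T. T \<union> E2) ` ?T1) \<le> card ?T1" using fin(1) by (rule card_image_le)
    ultimately show ?thesis by linarith
  qed
  finally show ?thesis .
qed

lemma card_proper_vertex_types:
  assumes "finite E" "one_sperner E" "E \<noteq> {}" "\<forall>e\<in>E. finite e"
  shows "card (proper_vertex_types V E) + 2 \<le> 2 * card E"
  using assms
proof (induction "card E" arbitrary: E rule: less_induct)
  case less
  show ?case
  proof (cases "2 \<le> card E")
    case False
    moreover have "card E \<noteq> 0" using less.prems(1,3) by simp
    ultimately have "card E = 1" by linarith
    then show ?thesis by (elim card_1_singletonE) (simp add: proper_vertex_types_singleton)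
  next
    case True
    obtain z where z: "\<exists>e\<in>E. z \<in> e" "\<exists>g\<in>E. z \<notin> g"
      and split: "\<And>e g. e \<in> E \<Longrightarrow> g \<in> E \<Longrightarrow> z \<in> e \<Longrightarrow> z \<notin> g \<Longrightarrow> e - {z} \<subseteq> g"
      using one_sperner_splitting_vertex[OF less.prems(1,2) True less.prems(4)] by blast
    define E1 where "E1 = {e \<in> E. z \<in> e}"
    define E2 where "E2 = {e \<in> E. z \<notin> e}"
    have fin: "finite E1" "finite E2" using less.prems(1) unfolding E1_def E2_def by auto
    have ne: "E1 \<noteq> {}" "E2 \<noteq> {}" using z unfolding E1_def E2_def by auto
    have "E = E1 \<union> E2" "E1 \<inter> E2 = {}" unfolding E1_def E2_def by auto
    then have card_E: "card E = card E1 + card E2" using card_Un_disjoint[OF fin] by simp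
    have sub: "E1 \<subseteq> E" "E2 \<subseteq> E" unfolding E1_def E2_def by auto
    have "card E1 < card E" "card E2 < card E" using card_E ne fin by auto
    then have "card (proper_vertex_types V E1) + 2 \<le> 2 * card E1"
      "card (proper_vertex_types V E2) + 2 \<le> 2 * card E2"
      using less.hyps fin ne one_sperner_subset[OF less.prems(2) sub(1)]
        one_sperner_subset[OF less.prems(2) sub(2)] less.prems(4) sub by blast+
    then show ?thesis
      using card_proper_vertex_types_split[where V = V, OF split less.prems(1)] card_E
      unfolding E1_def E2_def by linarith
  qed
qed

definition separates :: "'a set set \<Rightarrow> 'a \<Rightarrow> 'a \<Rightarrow> bool" where
  "separates E u v \<longleftrightarrow> (\<exists>e\<in>E. (u \<in> e) \<noteq> (v \<in> e))"

lemma separates_sym: "separates E u v \<Longrightarrow> separates E v u"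
  unfolding separates_def by blast

lemma hypergraph_finite_edges: "hypergraph V E \<Longrightarrow> finite E"
  unfolding hypergraph_def by (meson Pow_iff finite_Pow_iff finite_subset subsetI)

lemma reduced_1_sperner_D:
  assumes "reduced_1_sperner V E"
  shows "finite V" and "finite E" and "e \<in> E \<Longrightarrow> e \<subseteq> V" and "one_sperner E"
    and "v \<in> V \<Longrightarrow> \<exists>e\<in>E. v \<notin> e" and "v \<in> V \<Longrightarrow> \<exists>e\<in>E. v \<in> e"
    and "u \<in> V \<Longrightarrow> v \<in> V \<Longrightarrow> u \<noteq> v \<Longrightarrow> separates E u v"
  using assms hypergraph_finite_edges unfolding reduced_1_sperner_def hypergraph_def
    universal_vertex_def isolated_vertex_def twins_def separates_def by blast+

lemma reduced_1_sperner_card_le: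
  assumes red: "reduced_1_sperner V E" and "V \<noteq> {}"
  shows "card V + 2 \<le> 2 * card E"
proof -
  note red_D = reduced_1_sperner_D[OF red]
  have fin: "\<forall>e\<in>E. finite e" using red_D(1,3) finite_subset by blast
  have proper: "vertex_type E v \<noteq> {}" "vertex_type E v \<noteq> E" if "v \<in> V" for v
    using red_D(5,6)[OF that] unfolding vertex_type_def by auto
  then have "E \<noteq> {}" using \<open>V \<noteq> {}\<close> unfolding vertex_type_def by blast
  have "inj_on (vertex_type E) V"
    using red_D(7) unfolding separates_def vertex_type_def inj_on_def by blast
  moreover have "proper_vertex_types V E = vertex_type E ` V"
    using proper unfolding proper_vertex_types_def by blast
  ultimately have "card (proper_vertex_types V E) = card V" by (simp add: card_image)
  then show ?thesis
    using card_proper_vertex_types[where V = V, OF red_D(2,4) \<open>E \<noteq> {}\<close> fin] by simp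
qed

lemma one_sperner_image:
  assumes sp: "one_sperner E"
    and card_Diff: "\<And>e g. e \<in> E \<Longrightarrow> g \<in> E \<Longrightarrow> card (\<phi> e - \<phi> g) = card (e - g)"
  shows "one_sperner (\<phi> ` E)"
  unfolding one_sperner_def
proof (intro ballI impI)
  fix a b assume "a \<in> \<phi> ` E" "b \<in> \<phi> ` E" "a \<noteq> b"
  then obtain e g where "e \<in> E" "g \<in> E" "a = \<phi> e" "b = \<phi> g" "e \<noteq> g" by blast
  then show "min (card (a - b)) (card (b - a)) = 1"
    using sp unfolding one_sperner_def by (simp add: card_Diff)
qed

lemma one_sperner_Un:
  assumes "one_sperner A" "one_sperner B"
    and "\<And>a b. a \<in> A \<Longrightarrow> b \<in> B \<Longrightarrow> min (card (a - b)) (card (b - a)) = 1"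
  shows "one_sperner (A \<union> B)"
  using assms unfolding one_sperner_def by (metis Un_iff min.commute)

lemma reduced_1_sperner_inj_image:
  assumes "inj h" and red: "reduced_1_sperner V E"
  shows "reduced_1_sperner (h ` V) ((`) h ` E)"
proof -
  have "card (h ` e - h ` g) = card (e - g)" for e g
    using \<open>inj h\<close> by (simp add: image_set_diff[symmetric] card_image inj_on_subset)
  then have "one_sperner ((`) h ` E)"
    using red unfolding reduced_1_sperner_def by (blast intro: one_sperner_image)
  moreover have "h x \<in> h ` e \<longleftrightarrow> x \<in> e" for x e
    using \<open>inj h\<close> by (simp add: inj_image_mem_iff)
  ultimately show ?thesis
    using red unfolding reduced_1_sperner_def hypergraph_def universal_vertex_def
      isolated_vertex_def twins_def by (auto simp: image_mono)
qed

definition join_edges :: "'a set \<Rightarrow> 'a \<Rightarrow> 'a \<Rightarrow> 'a set set \<Rightarrow> 'a set set \<Rightarrow> 'a set set" where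
  "join_edges V1 z w E1 E2 = insert z ` E1 \<union> (\<lambda>f. insert w (V1 \<union> f)) ` E2"

locale reduced_1_sperner_pair =
  fixes V1 V2 :: "'a set" and E1 E2 :: "'a set set" and z w :: 'a
  assumes red1: "reduced_1_sperner V1 E1" and red2: "reduced_1_sperner V2 E2"
    and disjoint: "V1 \<inter> V2 = {}" and fresh: "z \<notin> V1 \<union> V2" "w \<notin> V1 \<union> V2" "z \<noteq> w"
    and nonempty: "E1 \<noteq> {}" "E2 \<noteq> {}"
begin

abbreviation V :: "'a set" where
  "V \<equiv> insert z (insert w (V1 \<union> V2))"

abbreviation E :: "'a set set" where
  "E \<equiv> join_edges V1 z w E1 E2"

lemmas edges_subset = reduced_1_sperner_D(3)[OF red1] reduced_1_sperner_D(3)[OF red2]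
lemmas not_universal = reduced_1_sperner_D(5)[OF red1] reduced_1_sperner_D(5)[OF red2]
lemmas not_isolated = reduced_1_sperner_D(6)[OF red1] reduced_1_sperner_D(6)[OF red2]
lemmas separates_parts = reduced_1_sperner_D(7)[OF red1] reduced_1_sperner_D(7)[OF red2]

lemma join_edgesI: "e \<in> E1 \<Longrightarrow> insert z e \<in> E" "f \<in> E2 \<Longrightarrow> insert w (V1 \<union> f) \<in> E"
  unfolding join_edges_def by blast+

lemma card_join_edges: "card E = card E1 + card E2"
proof -
  have "inj_on (insert z) E1"
    using edges_subset(1) fresh(1) by (intro inj_on_inverseI[where g = "\<lambda>a. a - {z}"]) auto
  moreover have "inj_on (\<lambda>f. insert w (V1 \<union> f)) E2"
    using edges_subset(2) disjoint fresh(2)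
    by (intro inj_on_inverseI[where g = "\<lambda>b. b \<inter> V2"]) auto
  moreover have "z \<notin> insert w (V1 \<union> f)" if "f \<in> E2" for f
    using that edges_subset(2) fresh by auto
  then have "insert z ` E1 \<inter> (\<lambda>f. insert w (V1 \<union> f)) ` E2 = {}" by auto
  ultimately show ?thesis
    unfolding join_edges_def
    using reduced_1_sperner_D(2)[OF red1] reduced_1_sperner_D(2)[OF red2]
    by (simp add: card_Un_disjoint card_image)
qed

lemma hypergraph_join_edges: "hypergraph V E"
  using edges_subset reduced_1_sperner_D(1)[OF red1] reduced_1_sperner_D(1)[OF red2]
  unfolding hypergraph_def join_edges_def by auto

lemma one_sperner_join_edges: "one_sperner E"
  unfolding join_edges_def
proof (rule one_sperner_Un)
  show "one_sperner (insert z ` E1)"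
    using reduced_1_sperner_D(4)[OF red1] edges_subset(1) fresh(1)
    by (intro one_sperner_image) (auto intro!: arg_cong[where f = card])
  show "one_sperner ((\<lambda>f. insert w (V1 \<union> f)) ` E2)"
    using reduced_1_sperner_D(4)[OF red2] edges_subset(2) disjoint fresh(2)
    by (intro one_sperner_image) (auto intro!: arg_cong[where f = card])
  fix a b assume "a \<in> insert z ` E1" "b \<in> (\<lambda>f. insert w (V1 \<union> f)) ` E2"
  then obtain e f where e: "e \<in> E1" "a = insert z e" and f: "f \<in> E2" "b = insert w (V1 \<union> f)"
    by blast
  have "a - b = {z}" using e f edges_subset fresh by auto
  moreover have "w \<in> b - a" using e f edges_subset(1) fresh by auto
  moreover have "finite (b - a)"
    using f edges_subset(2) reduced_1_sperner_D(1)[OF red1] reduced_1_sperner_D(1)[OF red2]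
    by (auto intro: finite_subset)
  ultimately show "min (card (a - b)) (card (b - a)) = 1"
    by (simp add: min_def Suc_le_eq card_gt_0_iff) blast
qed

lemma join_edges_not_universal:
  assumes v: "v \<in> V"
  shows "\<exists>a\<in>E. v \<notin> a"
proof -
  obtain e1 f2 where e1: "e1 \<in> E1" and f2: "f2 \<in> E2" using nonempty by blast
  consider "v = z" | "v = w" | "v \<in> V1" | "v \<in> V2" using v by blast
  then show ?thesis
  proof cases
    case 1
    then show ?thesis using edges_subset(2)[OF f2] fresh by (intro bexI[OF _ join_edgesI(2)[OF f2]]) auto
  next
    case 2
    then show ?thesis using edges_subset(1)[OF e1] fresh by (intro bexI[OF _ join_edgesI(1)[OF e1]]) auto
  next
    case 3
    then obtain e where "e \<in> E1" "v \<notin> e" using not_universal(1) by blast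
    then show ?thesis using 3 fresh by (intro bexI[OF _ join_edgesI(1)]) auto
  next
    case 4
    then obtain f where "f \<in> E2" "v \<notin> f" using not_universal(2) by blast
    then show ?thesis using 4 disjoint fresh by (intro bexI[OF _ join_edgesI(2)]) auto
  qed
qed

lemma join_edges_not_isolated:
  assumes v: "v \<in> V"
  shows "\<exists>a\<in>E. v \<in> a"
proof -
  obtain e1 f2 where e1: "e1 \<in> E1" and f2: "f2 \<in> E2" using nonempty by blast
  consider "v = z" | "v = w" | "v \<in> V1" | "v \<in> V2" using v by blast
  then show ?thesis
  proof cases
    case 1
    then show ?thesis by (intro bexI[OF _ join_edgesI(1)[OF e1]]) simp
  next
    case 2
    then show ?thesis by (intro bexI[OF _ join_edgesI(2)[OF f2]]) simp
  next
    case 3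
    then obtain e where "e \<in> E1" "v \<in> e" using not_isolated(1) by blast
    then show ?thesis by (intro bexI[OF _ join_edgesI(1)]) auto
  next
    case 4
    then obtain f where "f \<in> E2" "v \<in> f" using not_isolated(2) by blast
    then show ?thesis by (intro bexI[OF _ join_edgesI(2)]) auto
  qed
qed

lemma join_edges_separates_sides:
  assumes u: "u \<in> insert z V1" and v: "v \<in> insert w V2"
  shows "separates E u v"
proof -
  obtain e where "e \<in> E1" "u \<in> insert z e"
    using u nonempty(1) not_isolated(1) by blast
  moreover have "v \<notin> insert z e" if "e \<in> E1" for e
    using v edges_subset(1)[OF that] disjoint fresh by auto
  ultimately show ?thesis using join_edgesI(1) unfolding separates_def by blast
qed

lemma join_edges_separates_V1:
  assumes uv: "u \<in> V1" "v \<in> insert z V1" "u \<noteq> v"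
  shows "separates E u v"
proof (cases "v = z")
  case True
  obtain e where "e \<in> E1" "u \<notin> e" using not_universal(1) uv(1) by blast
  then show ?thesis
    using True fresh uv(1) unfolding separates_def by (intro bexI[OF _ join_edgesI(1)]) auto
next
  case False
  then obtain e where "e \<in> E1" "(u \<in> e) \<noteq> (v \<in> e)"
    using separates_parts(1) uv unfolding separates_def by blast
  then show ?thesis
    using uv False fresh unfolding separates_def by (intro bexI[OF _ join_edgesI(1)]) auto
qed

lemma join_edges_separates_V2:
  assumes uv: "u \<in> V2" "v \<in> insert w V2" "u \<noteq> v"
  shows "separates E u v"
proof (cases "v = w")
  case True
  obtain f where "f \<in> E2" "u \<notin> f" using not_universal(2) uv(1) by blast
  then show ?thesis
    using True disjoint fresh uv(1) unfolding separates_def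
    by (intro bexI[OF _ join_edgesI(2)]) auto
next
  case False
  then obtain f where "f \<in> E2" "(u \<in> f) \<noteq> (v \<in> f)"
    using separates_parts(2) uv unfolding separates_def by blast
  then show ?thesis
    using uv False disjoint fresh unfolding separates_def
    by (intro bexI[OF _ join_edgesI(2)]) auto
qed

lemma join_edges_separates:
  assumes uv: "u \<in> V" "v \<in> V" "u \<noteq> v"
  shows "separates E u v"
proof -
  consider "u \<in> insert z V1" "v \<in> insert z V1" | "u \<in> insert w V2" "v \<in> insert w V2"
    | "u \<in> insert z V1" "v \<in> insert w V2" | "u \<in> insert w V2" "v \<in> insert z V1"
    using uv(1,2) by blast
  then show ?thesis
  proof cases
    case 1
    show ?thesis
    proof (cases "u \<in> V1")
      case True
      then show ?thesis using 1(2) uv(3) by (rule join_edges_separates_V1)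
    next
      case False
      then have "v \<in> V1" using 1 uv(3) by blast
      then have "separates E v u" using 1(1) uv(3) by (intro join_edges_separates_V1) auto
      then show ?thesis by (rule separates_sym)
    qed
  next
    case 2
    show ?thesis
    proof (cases "u \<in> V2")
      case True
      then show ?thesis using 2(2) uv(3) by (rule join_edges_separates_V2)
    next
      case False
      then have "v \<in> V2" using 2 uv(3) by blast
      then have "separates E v u" using 2(1) uv(3) by (intro join_edges_separates_V2) auto
      then show ?thesis by (rule separates_sym)
    qed
  next
    case 3
    then show ?thesis by (rule join_edges_separates_sides)
  next
    case 4
    show ?thesis using join_edges_separates_sides[OF 4(2,1)] by (rule separates_sym)
  qed
qed

lemma reduced_1_sperner_join_edges: "reduced_1_sperner V E"
  unfolding reduced_1_sperner_def universal_vertex_def isolated_vertex_def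
  using hypergraph_join_edges one_sperner_join_edges join_edges_not_universal
    join_edges_not_isolated join_edges_separates
  by (auto simp: twins_def separates_def)

end

fun sharp_size :: "nat \<Rightarrow> nat" where
  "sharp_size 0 = 0"
| "sharp_size (Suc j) = 2 * sharp_size j + 2"

fun sharp_edges :: "nat \<Rightarrow> nat set set" where
  "sharp_edges 0 = {{}}"
| "sharp_edges (Suc j) =
    join_edges {..<sharp_size j} (2 * sharp_size j) (2 * sharp_size j + 1)
      (sharp_edges j) ((`) (\<lambda>x. x + sharp_size j) ` sharp_edges j)"

lemma sharp_size_eq: "sharp_size j = 2 ^ Suc j - 2"
proof -
  have "sharp_size j + 2 = 2 ^ Suc j" by (induction j) auto
  then show ?thesis by simp
qed

lemma reduced_1_sperner_sharp_edges:
  "reduced_1_sperner {..<sharp_size j} (sharp_edges j) \<and> card (sharp_edges j) = 2 ^ j"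
proof (induction j)
  case 0
  show ?case unfolding reduced_1_sperner_def hypergraph_def one_sperner_def by simp
next
  case (Suc j)
  define N where "N = sharp_size j"
  let ?shift = "\<lambda>x. x + N"
  have red: "reduced_1_sperner {..<N} (sharp_edges j)" and card: "card (sharp_edges j) = 2 ^ j"
    using Suc.IH unfolding N_def by auto
  have "inj ?shift" by (simp add: inj_on_def)
  have card_shift: "card ((`) ?shift ` sharp_edges j) = card (sharp_edges j)"
    using \<open>inj ?shift\<close> by (simp add: card_image inj_image_eq_iff inj_on_def)
  have "sharp_edges j \<noteq> {}" using card by auto
  then interpret pair: reduced_1_sperner_pair "{..<N}" "?shift ` {..<N}" "sharp_edges j"
    "(`) ?shift ` sharp_edges j" "2 * N" "2 * N + 1"
    using red reduced_1_sperner_inj_image[OF \<open>inj ?shift\<close> red]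
    by unfold_locales auto
  have "{..<N} \<union> ?shift ` {..<N} = {..<2 * N}"
    by (simp add: lessThan_atLeast0 ivl_disj_un_two(3) mult_2)
  then have "insert (2 * N) (insert (2 * N + 1) ({..<N} \<union> ?shift ` {..<N})) = {..<sharp_size (Suc j)}"
    unfolding N_def by (simp add: lessThan_Suc insert_commute)
  then show ?case
    using pair.reduced_1_sperner_join_edges pair.card_join_edges card_shift card
    unfolding N_def by simp
qed

theorem proposition17:
  shows "(\<forall>(V :: 'a set) E. reduced_1_sperner V E \<and> card V \<ge> 2 \<longrightarrow>
            real (card E) \<ge> ceiling ((real (card V) + 2) / 2))
       \<and> (\<forall>k::nat. k \<ge> 2 \<longrightarrow>
            (\<exists>(V :: nat set) E. reduced_1_sperner V E \<and> card V = 2 ^ k - 2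
               \<and> card E = 2 ^ (k - 1)
               \<and> real (card E) = ceiling ((real (card V) + 2) / 2)))"
proof (intro conjI allI impI)
  fix V :: "'a set" and E :: "'a set set"
  assume "reduced_1_sperner V E \<and> card V \<ge> 2"
  then have "card V + 2 \<le> 2 * card E" by (intro reduced_1_sperner_card_le) auto
  then have "real (card V + 2) \<le> real (2 * card E)" by (simp only: of_nat_le_iff)
  then have "(real (card V) + 2) / 2 \<le> real (card E)" by simp
  then show "real (card E) \<ge> ceiling ((real (card V) + 2) / 2)"
    by (metis ceiling_le_iff of_int_le_iff of_int_of_nat_eq)
next
  fix k :: nat
  assume "k \<ge> 2"
  then obtain j where k: "k = Suc j" by (cases k) auto
  have "(2::nat) \<le> 2 ^ k" unfolding k by simp
  have red: "reduced_1_sperner {..<sharp_size j} (sharp_edges j)"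
    and card_E: "card (sharp_edges j) = 2 ^ (k - 1)"
    using reduced_1_sperner_sharp_edges[of j] k by auto
  have card_V: "card {..<sharp_size j} = 2 ^ k - 2" using sharp_size_eq k by simp
  have "(real (2 ^ k - 2) + 2) / 2 = real (card (sharp_edges j))"
    using \<open>2 \<le> 2 ^ k\<close> card_E k by (simp add: of_nat_diff)
  then have "real (card (sharp_edges j)) = ceiling ((real (card {..<sharp_size j}) + 2) / 2)"
    unfolding card_V by (metis ceiling_of_nat of_int_of_nat_eq)
  with red card_V card_E
  show "\<exists>(V :: nat set) E. reduced_1_sperner V E \<and> card V = 2 ^ k - 2
      \<and> card E = 2 ^ (k - 1) \<and> real (card E) = ceiling ((real (card V) + 2) / 2)"
    by blast
qed

end
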